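(* For every $k\geq 1$, $\mathcal{L}_{\mathsf{SAFA}(|H|=k)}\subsetneq\mathcal{L}_{\mathsf{SAFA}(|H|=k+1)}$, where $\mathcal{L}_{\mathsf{SAFA}(|H|=j)}$ denotes the class of data languages accepted by SAFA $M=(Q,\Sigma\times D,q_0,F,H,\delta)$ with exactly $|H|=j$ sets.
   Context: $D$ is a fixed countably infinite set of data values; for a finite alphabet $\Sigma$, a data language is a subset of $(\Sigma\times D)^*$. A set augmented finite automaton (SAFA) is a tuple $M=(Q,\Sigma\times D,q_0,F,H,\delta)$: $Q$ finite set of states, $q_0\in Q$ initial, $F\subseteq Q$ final, $H=\{h_1,\dots,h_m\}$ a finite collection of (names of) sets of data values, $\delta\subseteq Q\times\Sigma\times C\times OP\times Q$ with $C=\{p(h_i),\,!p(h_i): h_i\in H\}$, $OP=\{-\}\cup\{\mathsf{ins}(h_i):h_i\in H\}$. Configurations are $(q,\langle S_1,\dots,S_m\rangle)$ with $S_i\subseteq D$ finite; initially state $q_0$ and all sets empty. On reading $(a,d)$, a transition $(q,a,\alpha,op,q')$ from the current state may be taken if $\alpha=p(h_i)$ and $d\in S_i$, or $\alpha=\,!p(h_i)$ and $d\notin S_i$; then the state becomes $q'$ and if $op=\mathsf{ins}(h_j)$ the value $d$ is added to $S_j$ ($op=-$ changes nothing). A word is accepted if some run reads it entirely and ends in $F$. *)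

theory Defs
  imports Main "HOL-Library.Countable"
begin

text \<open>States are natural numbers drawn from a
finite set; the sets of H are indexed by 0..<nsets.\<close>

datatype cond = Mem nat | NotMem nat
datatype oper = NoOp | Ins nat

record 'a safa =
  states :: "nat set"
  init   :: nat
  final  :: "nat set"
  nsets  :: nat
  trans  :: "(nat \<times> 'a \<times> cond \<times> oper \<times> nat) set"

fun cond_idx :: "cond \<Rightarrow> nat" where
  "cond_idx (Mem i) = i" | "cond_idx (NotMem i) = i"

fun oper_ok :: "nat \<Rightarrow> oper \<Rightarrow> bool" where
  "oper_ok m NoOp = True" | "oper_ok m (Ins i) = (i < m)"

definition wf_safa :: "'a safa \<Rightarrow> bool" where
  "wf_safa M \<longleftrightarrow> finite (states M) \<and> init M \<in> states M \<and> final M \<subseteq> states M \<and>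
     (\<forall>(q,a,c,op,q') \<in> trans M. q \<in> states M \<and> q' \<in> states M \<and>
         cond_idx c < nsets M \<and> oper_ok (nsets M) op)"

type_synonym 'd config = "nat \<times> (nat \<Rightarrow> 'd set)"

fun sat :: "cond \<Rightarrow> 'd \<Rightarrow> (nat \<Rightarrow> 'd set) \<Rightarrow> bool" where
  "sat (Mem i) d S = (d \<in> S i)"
| "sat (NotMem i) d S = (d \<notin> S i)"

fun apply_op :: "oper \<Rightarrow> 'd \<Rightarrow> (nat \<Rightarrow> 'd set) \<Rightarrow> (nat \<Rightarrow> 'd set)" where
  "apply_op NoOp d S = S"
| "apply_op (Ins j) d S = S(j := insert d (S j))"

definition step :: "'a safa \<Rightarrow> 'd config \<Rightarrow> 'a \<times> 'd \<Rightarrow> 'd config \<Rightarrow> bool" where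
  "step M c x c' \<longleftrightarrow> (\<exists>c0 op. (fst c, fst x, c0, op, fst c') \<in> trans M \<and>
       sat c0 (snd x) (snd c) \<and> snd c' = apply_op op (snd x) (snd c))"

definition reach :: "'a safa \<Rightarrow> ('a \<times> 'd) list \<Rightarrow> 'd config set" where
  "reach M w = foldl (\<lambda>C x. {c'. \<exists>c\<in>C. step M c x c'}) {(init M, \<lambda>_. {})} w"

definition lang :: "'a safa \<Rightarrow> ('a \<times> 'd) list set" where
  "lang M = {w. \<exists>c \<in> reach M w. fst c \<in> final M}"

definition SAFA_langs :: "nat \<Rightarrow> ('a \<times> 'd) list set set" where
  "SAFA_langs k = {L. \<exists>M :: 'a safa. wf_safa M \<and> nsets M = k \<and> L = lang M}"

end

theory Submission
  imports Defs
begin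

text \<open>Words in which every datum occurs at most K times are accepted with K sets: the
  automaton records each occurrence of a datum d by inserting d into a set not yet containing
  it. With only k sets, call the set of indices of the sets containing d the type of d; along
  a run it can only grow, hence changes at most k times. Read the word
  (e 0 ... e (N - 1)) repeated k + 1 times: every e j has a round in which its type stays
  constant, and for N > (k + 1) 2^k two distinct data e i and e j share both this round and
  their type in it. Reading e j in that round changes no set, so the run can equally read e i
  there, and the automaton accepts a word containing e i k + 2 times.\<close>

lemma count_list_distinct:
  "distinct xs \<Longrightarrow> count_list xs x = (if x \<in> set xs then 1 else 0)"
  by (induction xs) auto

lemma count_list_concat_replicate:
  "count_list (concat (replicate n xs)) x = n * count_list xs x"
  by (induction n) auto

lemma nth_concat_replicate:
  "r < n \<Longrightarrow> j < length xs \<Longrightarrow> concat (replicate n xs) ! (r * length xs + j) = xs ! j"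
proof (induction r arbitrary: n)
  case 0
  then show ?case by (cases n) (auto simp: nth_append)
next
  case (Suc r)
  then show ?case by (cases n) (auto simp: nth_append add.assoc)
qed

lemma count_list_list_update_new:
  "p < length xs \<Longrightarrow> xs ! p \<noteq> y \<Longrightarrow> count_list (xs[p := y]) y = Suc (count_list xs y)"
  by (induction xs arbitrary: p) (auto split: nat.splits)

lemma chain_stabilizes:
  fixes f :: "nat \<Rightarrow> 'b set"
  assumes "finite A" "card A \<le> n"
    and mono: "\<And>r. r \<le> n \<Longrightarrow> f r \<subseteq> f (Suc r)"
    and bounded: "\<And>r. r \<le> Suc n \<Longrightarrow> f r \<subseteq> A"
  shows "\<exists>r\<le>n. f r = f (Suc r)"
proof (rule ccontr)
  assume "\<not> ?thesis"
  with mono have strict: "f r \<subset> f (Suc r)" if "r \<le> n" for r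
    using that by blast
  have "r \<le> card (f r)" if "r \<le> Suc n" for r
    using that
  proof (induction r)
    case (Suc r)
    have "card (f r) < card (f (Suc r))"
      using strict Suc.prems bounded[OF Suc.prems] \<open>finite A\<close>
      by (intro psubset_card_mono) (auto intro: finite_subset)
    with Suc show ?case by simp
  qed simp
  moreover have "card (f (Suc n)) \<le> card A"
    using bounded \<open>finite A\<close> by (intro card_mono) auto
  ultimately show False
    using \<open>card A \<le> n\<close> by (metis order_refl le_trans not_less_eq_eq)
qed

lemma stable_round_pigeonhole:
  fixes T :: "nat \<Rightarrow> nat \<Rightarrow> 'b set"
  assumes "finite A" "card A \<le> k" "Suc k * 2 ^ k < N"
    and mono: "\<And>j r. j < N \<Longrightarrow> r \<le> k \<Longrightarrow> T r j \<subseteq> T (Suc r) j"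
    and bounded: "\<And>j r. j < N \<Longrightarrow> r \<le> Suc k \<Longrightarrow> T r j \<subseteq> A"
  obtains i j r where "i < N" "j < N" "i \<noteq> j" "r \<le> k"
    "T (Suc r) i = T r i" "T (Suc r) j = T r j" "T r i = T r j"
proof -
  have "\<forall>j. \<exists>r. j < N \<longrightarrow> r \<le> k \<and> T r j = T (Suc r) j"
    using chain_stabilizes[OF assms(1,2), of "\<lambda>r. T r _"] mono bounded by metis
  then obtain rr where rr: "\<And>j. j < N \<Longrightarrow> rr j \<le> k \<and> T (rr j) j = T (Suc (rr j)) j"
    by metis
  define h where "h j = (rr j, T (rr j) j)" for j
  have "h ` {..<N} \<subseteq> {..k} \<times> Pow A"
    using rr bounded le_SucI by (fastforce simp: h_def)
  moreover have "card ({..k} \<times> Pow A) = Suc k * 2 ^ card A"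
    using \<open>finite A\<close> by (simp add: card_cartesian_product card_Pow)
  moreover have "Suc k * 2 ^ card A < N"
    using \<open>card A \<le> k\<close> \<open>Suc k * 2 ^ k < N\<close>
    by (meson le_less_trans mult_le_mono2 one_le_numeral power_increasing)
  ultimately have "\<not> inj_on h {..<N}"
    using card_inj_on_le[of h "{..<N}" "{..k} \<times> Pow A"] \<open>finite A\<close> by auto
  then obtain i j where "i < N" "j < N" "i \<noteq> j" "h i = h j"
    unfolding inj_on_def by blast
  then show thesis
    using rr[of i] rr[of j] by (intro that[of i j "rr j"]) (auto simp: h_def)
qed

definition data_type :: "(nat \<Rightarrow> 'd set) \<Rightarrow> 'd \<Rightarrow> nat set" where
  "data_type S d = {l. d \<in> S l}"

lemma sat_data_type_cong:
  "data_type S d' = data_type S d \<Longrightarrow> sat c d' S = sat c d S"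
  by (cases c) (auto simp: data_type_def)

lemma step_data_type_mono:
  assumes "step M c x c'"
  shows "data_type (snd c) d \<subseteq> data_type (snd c') d"
proof -
  obtain op where "snd c' = apply_op op (snd x) (snd c)"
    using assms by (auto simp: step_def)
  then show ?thesis
    by (cases op) (auto simp: data_type_def)
qed

lemma step_data_type_bounded:
  assumes "wf_safa M" "step M c x c'" "data_type (snd c) d \<subseteq> {..<nsets M}"
  shows "data_type (snd c') d \<subseteq> {..<nsets M}"
proof -
  obtain g op where "(fst c, fst x, g, op, fst c') \<in> trans M"
    and op: "snd c' = apply_op op (snd x) (snd c)"
    using assms(2) by (auto simp: step_def)
  then have "oper_ok (nsets M) op"
    using assms(1) by (auto simp: wf_safa_def)
  with op assms(3) show ?thesis
    by (cases op) (auto simp: data_type_def)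
qed

lemma step_replace_datum:
  assumes "step M c (a, d) c'"
    and "data_type (snd c') d = data_type (snd c) d"
    and "data_type (snd c) d' = data_type (snd c) d"
  shows "step M c (a, d') c'"
proof -
  obtain g op where tr: "(fst c, a, g, op, fst c') \<in> trans M" "sat g d (snd c)"
    and op: "snd c' = apply_op op d (snd c)"
    using assms(1) by (auto simp: step_def)
  have "snd c' = apply_op op d' (snd c)"
  proof (cases op)
    case (Ins l)
    with op have "l \<in> data_type (snd c') d" by (simp add: data_type_def)
    with assms(2,3) have "d \<in> snd c l" "d' \<in> snd c l" by (auto simp: data_type_def)
    with op Ins show ?thesis by (simp add: insert_absorb)
  qed (use op in simp)
  moreover have "sat g d' (snd c)"
    using tr(2) sat_data_type_cong[OF assms(3)] by simp
  ultimately show ?thesis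
    using tr(1) unfolding step_def by auto
qed

lemma reach_Nil: "reach M [] = {(init M, \<lambda>_. {})}"
  by (simp add: reach_def)

lemma reach_snoc: "reach M (w @ [x]) = {c'. \<exists>c\<in>reach M w. step M c x c'}"
  by (simp add: reach_def)

definition run :: "'a safa \<Rightarrow> ('a \<times> 'd) list \<Rightarrow> (nat \<Rightarrow> 'd config) \<Rightarrow> bool" where
  "run M w cf \<longleftrightarrow> cf 0 = (init M, \<lambda>_. {}) \<and> (\<forall>t<length w. step M (cf t) (w ! t) (cf (Suc t)))"

lemma reach_iff_run: "c \<in> reach M w \<longleftrightarrow> (\<exists>cf. run M w cf \<and> cf (length w) = c)"
proof (induction w arbitrary: c rule: rev_induct)
  case Nil
  then show ?case by (auto simp: reach_Nil run_def)
next
  case (snoc x w)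
  have run_snoc: "run M (w @ [x]) cf \<longleftrightarrow> run M w cf \<and> step M (cf (length w)) x (cf (Suc (length w)))"
    for cf
    by (auto simp: run_def nth_append less_Suc_eq)
  show ?case
  proof
    assume "c \<in> reach M (w @ [x])"
    then obtain cf where "run M w cf" "step M (cf (length w)) x c"
      using snoc.IH by (auto simp: reach_snoc)
    then have "run M (w @ [x]) (cf(Suc (length w) := c))"
      unfolding run_snoc by (auto simp: run_def)
    then show "\<exists>cf. run M (w @ [x]) cf \<and> cf (length (w @ [x])) = c"
      by fastforce
  next
    assume "\<exists>cf. run M (w @ [x]) cf \<and> cf (length (w @ [x])) = c"
    then obtain cf where "run M w cf" "step M (cf (length w)) x c"
      by (auto simp: run_snoc)
    then show "c \<in> reach M (w @ [x])"
      using snoc.IH[of "cf (length w)"] by (auto simp: reach_snoc)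
  qed
qed

lemma lang_iff_run: "w \<in> lang M \<longleftrightarrow> (\<exists>cf. run M w cf \<and> fst (cf (length w)) \<in> final M)"
  unfolding lang_def Bex_def reach_iff_run by blast

lemma run_data_type_mono:
  assumes "run M w cf" "t \<le> t'" "t' \<le> length w"
  shows "data_type (snd (cf t)) d \<subseteq> data_type (snd (cf t')) d"
  using assms(2,3)
proof (induction t' rule: dec_induct)
  case (step t')
  with assms(1) have "step M (cf t') (w ! t') (cf (Suc t'))"
    by (simp add: run_def)
  with step show ?case
    using step_data_type_mono by fastforce
qed simp

lemma run_data_type_stable:
  assumes "run M w cf" "t1 \<le> t" "t \<le> t2" "t2 \<le> length w"
    and "data_type (snd (cf t2)) d = data_type (snd (cf t1)) d"
  shows "data_type (snd (cf t)) d = data_type (snd (cf t1)) d"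
  using run_data_type_mono[OF assms(1), of t1 t d] run_data_type_mono[OF assms(1), of t t2 d]
    assms(2-5) by auto

lemma run_data_type_bounded:
  assumes "wf_safa M" "run M w cf" "t \<le> length w"
  shows "data_type (snd (cf t)) d \<subseteq> {..<nsets M}"
  using assms(3)
proof (induction t)
  case 0
  with assms(2) show ?case by (simp add: run_def data_type_def)
next
  case (Suc t)
  with assms(2) have "step M (cf t) (w ! t) (cf (Suc t))"
    by (simp add: run_def)
  with Suc assms(1) show ?case
    using step_data_type_bounded by fastforce
qed

lemma reach_data_type_bounded:
  "wf_safa M \<Longrightarrow> c \<in> reach M w \<Longrightarrow> data_type (snd c) d \<subseteq> {..<nsets M}"
  using run_data_type_bounded by (fastforce simp: reach_iff_run)

lemma run_list_update:
  assumes "run M w cf" "p < length w" "w ! p = (a, d)"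
    and "data_type (snd (cf (Suc p))) d = data_type (snd (cf p)) d"
    and "data_type (snd (cf p)) d' = data_type (snd (cf p)) d"
  shows "run M (w[p := (a, d')]) cf"
proof -
  have "step M (cf p) (a, d) (cf (Suc p))"
    using assms(1-3) unfolding run_def by metis
  then have "step M (cf p) (a, d') (cf (Suc p))"
    using assms(4,5) by (rule step_replace_datum)
  with assms(1,2) show ?thesis
    by (auto simp: run_def nth_list_update)
qed

lemma lang_nsets_update: "lang (M\<lparr>nsets := n\<rparr>) = lang M"
  by (simp add: lang_def reach_def step_def)

lemma SAFA_langs_mono:
  assumes "k \<le> n"
  shows "(SAFA_langs k :: ('a \<times> 'd) list set set) \<subseteq> SAFA_langs n"
proof
  fix L :: "('a \<times> 'd) list set" assume "L \<in> SAFA_langs k"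
  then obtain M where M: "wf_safa M" "nsets M = k" "L = lang M"
    by (auto simp: SAFA_langs_def)
  have "oper_ok n op" if "oper_ok k op" for op
    using that assms by (cases op) auto
  with M assms have "wf_safa (M\<lparr>nsets := n\<rparr>)"
    unfolding wf_safa_def by fastforce
  moreover have "L = lang (M\<lparr>nsets := n\<rparr>)"
    using M(3) by (simp add: lang_nsets_update)
  ultimately show "L \<in> SAFA_langs n"
    unfolding SAFA_langs_def by fastforce
qed

definition bounded_occurrences :: "nat \<Rightarrow> ('a \<times> 'd) list set" where
  "bounded_occurrences K = {w. \<forall>d. count_list (map snd w) d \<le> K}"

definition counter_safa :: "nat \<Rightarrow> 'a safa" where
  "counter_safa K = \<lparr>states = {0}, init = 0, final = {0}, nsets = K,
     trans = {(0, a, NotMem l, Ins l, 0) | a l. l < K}\<rparr>"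

lemma wf_counter_safa: "wf_safa (counter_safa K)"
  by (auto simp: wf_safa_def counter_safa_def)

lemma nsets_counter_safa [simp]: "nsets (counter_safa K) = K"
  by (simp add: counter_safa_def)

lemma reach_counter_safa:
  assumes "c \<in> reach (counter_safa K) w"
  shows "fst c = 0 \<and> (\<forall>d. card (data_type (snd c) d) = count_list (map snd w) d)"
  using assms
proof (induction w arbitrary: c rule: rev_induct)
  case Nil
  then show ?case by (simp add: reach_Nil counter_safa_def data_type_def)
next
  case (snoc x w)
  then obtain c0 where c0: "c0 \<in> reach (counter_safa K) w" "step (counter_safa K) c0 x c"
    by (auto simp: reach_snoc)
  then obtain l where l: "snd x \<notin> snd c0 l" "fst c = 0"
    "snd c = (snd c0)(l := insert (snd x) (snd c0 l))"
    by (auto simp: step_def counter_safa_def)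
  have type: "data_type (snd c) d =
      (if d = snd x then insert l (data_type (snd c0) d) else data_type (snd c0) d)" for d
    using l by (auto simp: data_type_def)
  have "finite (data_type (snd c0) d)" for d
    using reach_data_type_bounded[OF wf_counter_safa c0(1)] by (meson finite_lessThan finite_subset)
  moreover have "l \<notin> data_type (snd c0) (snd x)"
    using l by (simp add: data_type_def)
  ultimately show ?case
    using snoc.IH[OF c0(1)] l(2) by (simp add: type)
qed

lemma reach_counter_safa_nonempty:
  "w \<in> bounded_occurrences K \<Longrightarrow> reach (counter_safa K) w \<noteq> {}"
proof (induction w rule: rev_induct)
  case Nil
  then show ?case by (simp add: reach_Nil)
next
  case (snoc x w)
  have "count_list (map snd w) d \<le> count_list (map snd (w @ [x])) d" for d
    by simp
  then have "w \<in> bounded_occurrences K"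
    using snoc.prems le_trans unfolding bounded_occurrences_def by blast
  then obtain c where c: "c \<in> reach (counter_safa K) w"
    using snoc.IH by blast
  have "count_list (map snd (w @ [x])) (snd x) \<le> K"
    using snoc.prems unfolding bounded_occurrences_def by blast
  then have "Suc (count_list (map snd w) (snd x)) \<le> K"
    by simp
  then have "data_type (snd c) (snd x) \<noteq> {..<K}"
    using reach_counter_safa[OF c] by (auto dest: spec[where x = "snd x"])
  then obtain l where "l < K" "l \<notin> data_type (snd c) (snd x)"
    using reach_data_type_bounded[OF wf_counter_safa c, of "snd x"] by auto
  then have "step (counter_safa K) c x (0, (snd c)(l := insert (snd x) (snd c l)))"
    using reach_counter_safa[OF c] unfolding step_def
    by (auto simp: counter_safa_def data_type_def intro!: exI[of _ "NotMem l"] exI[of _ "Ins l"])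
  with c show ?case
    by (auto simp: reach_snoc)
qed

lemma lang_counter_safa:
  "lang (counter_safa K) = (bounded_occurrences K :: ('a \<times> 'd) list set)"
proof (intro set_eqI iffI)
  fix w :: "('a \<times> 'd) list" assume "w \<in> lang (counter_safa K)"
  then obtain c where c: "c \<in> reach (counter_safa K) w"
    by (auto simp: lang_def)
  have "card (data_type (snd c) d) \<le> K" for d
    using reach_data_type_bounded[OF wf_counter_safa c]
    by (metis card_lessThan card_mono finite_lessThan nsets_counter_safa)
  with reach_counter_safa[OF c] show "w \<in> bounded_occurrences K"
    by (simp add: bounded_occurrences_def)
next
  fix w :: "('a \<times> 'd) list" assume "w \<in> bounded_occurrences K"
  then obtain c where "c \<in> reach (counter_safa K) w"
    using reach_counter_safa_nonempty by blast
  with reach_counter_safa[OF this] show "w \<in> lang (counter_safa K)"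
    by (auto simp: lang_def counter_safa_def)
qed

definition round_word :: "nat \<Rightarrow> nat \<Rightarrow> (nat \<Rightarrow> 'd) \<Rightarrow> ('a \<times> 'd) list" where
  "round_word n N e = map (Pair undefined) (concat (replicate n (map e [0..<N])))"

lemma length_round_word: "length (round_word n N e) = n * N"
  by (simp add: round_word_def length_concat sum_list_replicate)

lemma nth_round_word:
  assumes "r < n" "j < N"
  shows "round_word n N e ! (r * N + j) = (undefined, e j)"
proof -
  have "r * N + j < n * N"
    using assms mult_le_mono1[of "Suc r" n N] by simp
  then show ?thesis
    using assms nth_concat_replicate[of r n j "map e [0..<N]"]
    by (simp add: round_word_def length_concat sum_list_replicate)
qed

lemma count_round_word:
  "inj e \<Longrightarrow> count_list (map snd (round_word n N e)) d = (if d \<in> e ` {..<N} then n else 0)"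
  by (simp add: round_word_def comp_def count_list_concat_replicate count_list_distinct
      distinct_map inj_on_subset atLeast0LessThan)

lemma round_word_swap_in_lang:
  assumes wf: "wf_safa M" and "Suc (nsets M) * 2 ^ nsets M < N"
    and "round_word (Suc (nsets M)) N e \<in> lang M" (is "?w \<in> _")
  obtains i j p where "i < N" "j < N" "i \<noteq> j" "p < length ?w"
    "?w ! p = (undefined, e j)" "?w[p := (undefined, e i)] \<in> lang M"
proof -
  define k where "k = nsets M"
  obtain cf where run: "run M ?w cf" and acc: "fst (cf (length ?w)) \<in> final M"
    using assms(3) by (auto simp: lang_iff_run)
  define T where "T r j = data_type (snd (cf (r * N))) (e j)" for r j
  have round_le: "r * N \<le> length ?w" if "r \<le> Suc k" for r
    using mult_le_mono1[OF that] by (simp add: length_round_word k_def)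
  obtain i j r where ij: "i < N" "j < N" "i \<noteq> j" "r \<le> k"
    and stable: "T (Suc r) i = T r i" "T (Suc r) j = T r j" "T r i = T r j"
  proof (rule stable_round_pigeonhole[of "{..<k}" k N T])
    show "T r j \<subseteq> T (Suc r) j" if "r \<le> k" for r j
      using that round_le[of "Suc r"] unfolding T_def by (intro run_data_type_mono[OF run]) auto
    show "T r j \<subseteq> {..<k}" if "r \<le> Suc k" for r j
      using run_data_type_bounded[OF wf run round_le[OF that]] by (simp add: T_def k_def)
  qed (use assms(2) in \<open>auto simp: k_def\<close>)
  define p where "p = r * N + j"
  have p: "r * N \<le> p" "Suc p \<le> Suc r * N" "Suc r * N \<le> length ?w"
    using ij round_le[of "Suc r"] by (auto simp: p_def)
  have w_p: "?w ! p = (undefined, e j)"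
    using ij nth_round_word[of r "Suc k" j N e] by (simp add: p_def k_def)
  have type_j: "data_type (snd (cf t)) (e j) = T r j" if "r * N \<le> t" "t \<le> Suc r * N" for t
    using run_data_type_stable[OF run that p(3)] stable(2) by (simp add: T_def)
  have type_i: "data_type (snd (cf p)) (e i) = T r j"
    using run_data_type_stable[OF run p(1) _ p(3)] p(2) stable(1,3) by (simp add: T_def)
  have "run M (?w[p := (undefined, e i)]) cf"
    using p type_j type_i by (intro run_list_update[OF run _ w_p]) auto
  with acc have "?w[p := (undefined, e i)] \<in> lang M"
    by (auto simp: lang_iff_run)
  with ij p w_p show thesis
    by (intro that) auto
qed

lemma bounded_occurrences_not_lang:
  fixes M :: "'a safa" and e :: "nat \<Rightarrow> 'd"
  assumes "wf_safa M" and "inj e"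
  shows "lang M \<noteq> (bounded_occurrences (Suc (nsets M)) :: ('a \<times> 'd) list set)"
    (is "_ \<noteq> ?L")
proof
  define N where "N = Suc (nsets M) * 2 ^ nsets M + 1"
  define w :: "('a \<times> 'd) list" where "w = round_word (Suc (nsets M)) N e"
  assume L: "lang M = ?L"
  then have "w \<in> lang M"
    by (simp add: bounded_occurrences_def count_round_word[OF \<open>inj e\<close>] w_def)
  moreover have "Suc (nsets M) * 2 ^ nsets M < N"
    by (simp add: N_def)
  ultimately obtain i j p where ij: "i < N" "j < N" "i \<noteq> j" and p: "p < length w"
    "w ! p = (undefined, e j)" "w[p := (undefined, e i)] \<in> lang M"
    using round_word_swap_in_lang[OF \<open>wf_safa M\<close>] unfolding w_def by blast
  have "count_list (map snd (w[p := (undefined, e i)])) (e i) = Suc (Suc (nsets M))"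
    using p ij \<open>inj e\<close>
    by (simp add: map_update count_list_list_update_new inj_eq count_round_word w_def)
  with p(3) L show False
    unfolding bounded_occurrences_def by (metis mem_Collect_eq Suc_n_not_le_n)
qed

theorem corollary1:
  assumes "infinite (UNIV :: 'd::countable set)" and "k \<ge> 1"
  shows "(SAFA_langs k :: (('a::finite \<times> 'd) list set) set) \<subset> SAFA_langs (k + 1)"
proof -
  obtain e :: "nat \<Rightarrow> 'd" where "inj e"
    using infinite_countable_subset[OF assms(1)] by blast
  have "lang (counter_safa (Suc k)) \<in> (SAFA_langs (k + 1) :: ('a \<times> 'd) list set set)"
    by (auto simp: SAFA_langs_def intro!: exI[of _ "counter_safa (Suc k)"] wf_counter_safa)
  moreover have "lang (counter_safa (Suc k)) \<notin> (SAFA_langs k :: ('a \<times> 'd) list set set)"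
    using bounded_occurrences_not_lang[OF _ \<open>inj e\<close>]
    by (auto simp: SAFA_langs_def lang_counter_safa)
  ultimately show ?thesis
    using SAFA_langs_mono[of k "k + 1"] by auto
qed

end
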